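(* Let $u\in\mathbb{R}^m$. If there exists $b\in\mathbb{R}^p$ with $\mathcal{P}(b)\neq\emptyset$ such that $-J_{f,0}^{-1}Mg(x,u)\in\mathcal{P}(b)$ for all $x\in\mathcal{P}(b)$, and $h(x,u)\le 0$ for all $x\in\mathcal{P}(b)$, then $u$ is feasible, and there is a state $x\in\mathcal{P}(b)$ with $f(x,u)=0$ and $h(x,u)\le 0$.
   Context: Let $f:\mathbb{R}^n\times\mathbb{R}^m\to\mathbb{R}^n$ and $h:\mathbb{R}^n\times\mathbb{R}^m\to\mathbb{R}^r$ be continuous and differentiable, and suppose there are a continuously differentiable map $\psi:\mathbb{R}^n\times\mathbb{R}^m\to\mathbb{R}^q$ and constant matrices $M\in\mathbb{R}^{n\times q}$, $L\in\mathbb{R}^{r\times q}$ with $f=M\psi$ and $h=L\psi$. There is a base point $(x_0,u_0)$ with $f(x_0,u_0)=0$, $h(x_0,u_0)\le 0$, at which $J_{f,0}=\frac{\partial f}{\partial x}\big|_{(x_0,u_0)}$ is nonsingular. Let $J_{\psi,0}=\frac{\partial \psi}{\partial x}\big|_{(x_0,u_0)}\in\mathbb{R}^{q\times n}$ and $g(x,u)=\psi(x,u)-J_{\psi,0}x$. A fixed matrix $A\in\mathbb{R}^{p\times n}$ is chosen so that for every $b\in\mathbb{R}^p$ the polytope $\mathcal{P}(b)=\{x\in\mathbb{R}^n: Ax\le b\}$ is bounded (hence compact). $u$ is called feasible if there is $x$ with $f(x,u)=0$ and $h(x,u)\le 0$. Vector inequalities are componentwise. *)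

theory Defs
  imports "HOL-Analysis.Analysis"
begin

definition polytope :: "real^'n^'p \<Rightarrow> real^'p \<Rightarrow> (real^'n) set" where
  "polytope A b = {x. \<forall>i. (A *v x) $ i \<le> b $ i}"

definition feasible ::
  "((real^'n) \<times> (real^'m) \<Rightarrow> real^'n) \<Rightarrow> ((real^'n) \<times> (real^'m) \<Rightarrow> real^'r) \<Rightarrow> real^'m \<Rightarrow> bool" where
  "feasible f h u \<longleftrightarrow> (\<exists>x. f (x, u) = 0 \<and> (\<forall>i. h (x, u) $ i \<le> 0))"

end

theory Submission
  imports Defs "HOL-Analysis.Analysis"
begin

text \<open>The map \<open>T x = - J\<^sub>f\<^sub>0\<^sup>-\<^sup>1 M g(x,u)\<close> is the simplified Newton map at the base
  point: since \<open>J\<^sub>f\<^sub>0 = M J\<^sub>\<psi>\<^sub>0\<close>, its fixed points are exactly the zeros of \<open>f(\<cdot>,u)\<close>.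
  The hypotheses say that \<open>T\<close> maps the compact convex polytope \<open>P(b)\<close> into itself,
  so Brouwer's theorem provides such a fixed point in \<open>P(b)\<close>, where moreover \<open>h \<le> 0\<close>.\<close>

lemma matrix_inv_mult_left:
  fixes A :: "'a::semiring_1^'n^'m"
  assumes "invertible A"
  shows "matrix_inv A ** A = mat 1"
  using someI_ex[OF assms[unfolded invertible_def]] unfolding matrix_inv_def by blast

lemma matrix_inv_mult_right:
  fixes A :: "'a::semiring_1^'n^'m"
  assumes "invertible A"
  shows "A ** matrix_inv A = mat 1"
  using someI_ex[OF assms[unfolded invertible_def]] unfolding matrix_inv_def by blast

lemma newton_fixed_point_eq_zero:
  fixes J :: "real^'n^'n"
  assumes "invertible J"
    and fixed: "x = - (matrix_inv J *v (y - J *v x))"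
  shows "y = 0"
proof -
  have "matrix_inv J *v (J *v x) = x"
    using assms(1) by (simp add: matrix_vector_mul_assoc matrix_inv_mult_left)
  with fixed have "matrix_inv J *v y = 0"
    by (simp add: matrix_vector_mult_diff_distrib)
  then have "J *v (matrix_inv J *v y) = 0"
    by simp
  then show "y = 0"
    using assms(1) by (simp add: matrix_vector_mul_assoc matrix_inv_mult_right)
qed

lemma has_derivative_matrix_chain_eq:
  fixes g :: "real^'n \<Rightarrow> real^'q" and M :: "real^'q^'m"
  assumes g: "(g has_derivative (\<lambda>v. J *v v)) (at x)"
    and Mg: "((\<lambda>y. M *v g y) has_derivative (\<lambda>v. K *v v)) (at x)"
  shows "K = M ** J"
proof -
  have "((\<lambda>y. M *v g y) has_derivative (\<lambda>v. M *v (J *v v))) (at x)"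
    using bounded_linear.has_derivative[OF matrix_vector_mul_bounded_linear g] .
  then have "(\<lambda>v. K *v v) = (\<lambda>v. M *v (J *v v))"
    using has_derivative_unique[OF Mg] by blast
  then show ?thesis
    by (simp add: matrix_eq matrix_vector_mul_assoc fun_eq_iff)
qed

lemma polytope_eq_Inter_halfspaces:
  "polytope A c = (\<Inter>i. {x. A $ i \<bullet> x \<le> c $ i})"
  by (auto simp: polytope_def matrix_vector_mul_component)

lemma closed_polytope: "closed (polytope A c)"
  by (simp add: polytope_eq_Inter_halfspaces closed_INT closed_halfspace_le)

lemma convex_polytope: "convex (polytope A c)"
  by (simp add: polytope_eq_Inter_halfspaces convex_INT convex_halfspace_le)

lemma polytope_fixed_point:
  assumes "bounded (polytope A c)" and "polytope A c \<noteq> {}"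
    and "continuous_on (polytope A c) T" and "T \<in> polytope A c \<rightarrow> polytope A c"
  obtains x where "x \<in> polytope A c" and "T x = x"
proof (rule brouwer)
  show "compact (polytope A c)"
    using assms(1) closed_polytope by (simp add: compact_eq_bounded_closed)
qed (use assms convex_polytope in auto)

lemma continuous_on_C1:
  assumes "\<exists>D. (\<forall>z. (\<psi> has_derivative blinfun_apply (D z)) (at z)) \<and> continuous_on UNIV D"
  shows "continuous_on UNIV \<psi>"
  using assms has_derivative_continuous continuous_at_imp_continuous_on by blast

theorem lemma3:
  fixes f :: "(real^'n) \<times> (real^'m) \<Rightarrow> real^'n"
    and h :: "(real^'n) \<times> (real^'m) \<Rightarrow> real^'r"
    and \<psi> :: "(real^'n) \<times> (real^'m) \<Rightarrow> real^'q"
    and M :: "real^'q^'n" and L :: "real^'q^'r"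
    and x0 :: "real^'n" and u0 :: "real^'m"
    and Jf0 :: "real^'n^'n" and J\<psi>0 :: "real^'n^'q"
    and A :: "real^'n^'p"
    and u :: "real^'m" and b :: "real^'p"
  assumes f_cont: "continuous_on UNIV f" and f_diff: "\<And>z. f differentiable (at z)"
    and h_cont: "continuous_on UNIV h" and h_diff: "\<And>z. h differentiable (at z)"
    and \<psi>_C1: "\<exists>D. (\<forall>z. (\<psi> has_derivative blinfun_apply (D z)) (at z)) \<and> continuous_on UNIV D"
    and f_eq: "\<And>z. f z = M *v \<psi> z"
    and h_eq: "\<And>z. h z = L *v \<psi> z"
    and base_f: "f (x0, u0) = 0"
    and base_h: "\<forall>i. h (x0, u0) $ i \<le> 0"
    and Jf0: "((\<lambda>x. f (x, u0)) has_derivative (\<lambda>v. Jf0 *v v)) (at x0)"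
    and Jf0_inv: "invertible Jf0"
    and J\<psi>0: "((\<lambda>x. \<psi> (x, u0)) has_derivative (\<lambda>v. J\<psi>0 *v v)) (at x0)"
    and A_bounded: "\<And>c. bounded (polytope A c)"
    and P_ne: "polytope A b \<noteq> {}"
    and self_map: "\<forall>x\<in>polytope A b.
        - (matrix_inv Jf0 *v (M *v (\<psi> (x, u) - J\<psi>0 *v x))) \<in> polytope A b"
    and h_le: "\<forall>x\<in>polytope A b. \<forall>i. h (x, u) $ i \<le> 0"
  shows "feasible f h u \<and>
         (\<exists>x\<in>polytope A b. f (x, u) = 0 \<and> (\<forall>i. h (x, u) $ i \<le> 0))"
proof -
  define T where "T x = - (matrix_inv Jf0 *v (M *v (\<psi> (x, u) - J\<psi>0 *v x)))" for x
  have "continuous_on UNIV (\<lambda>x. \<psi> (x, u))"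
    using continuous_on_C1[OF \<psi>_C1] by (rule continuous_on_compose2) (auto intro: continuous_intros)
  then have "continuous_on UNIV T"
    unfolding T_def
    by (intro continuous_intros matrix_vector_mul_bounded_linear[THEN bounded_linear.continuous_on])
  then have "continuous_on (polytope A b) T"
    by (rule continuous_on_subset) simp
  moreover have "T \<in> polytope A b \<rightarrow> polytope A b"
    using self_map by (auto simp: T_def)
  ultimately obtain x where x: "x \<in> polytope A b" and "T x = x"
    using polytope_fixed_point[OF A_bounded P_ne] by blast
  moreover have "Jf0 = M ** J\<psi>0"
    using has_derivative_matrix_chain_eq[OF J\<psi>0] Jf0 f_eq by simp
  ultimately have "x = - (matrix_inv Jf0 *v (f (x, u) - Jf0 *v x))"
    by (simp add: T_def f_eq matrix_vector_mult_diff_distrib matrix_vector_mul_assoc)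
  then have "f (x, u) = 0"
    using newton_fixed_point_eq_zero[OF Jf0_inv] by blast
  then show ?thesis
    using x h_le unfolding feasible_def by blast
qed

end
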